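(* Let $N\ge 3$ be an integer, let $\Delta\theta^*=2\pi/N$, and let $P\neq 0$ be a real constant. Let $(\theta_k)_{k\ge1}$ and $(\omega_k)_{k\ge1}$ be real sequences with $\omega_k>0$ for all $k$, satisfying for every $k\ge 1$ $$\theta_{k+1}=\theta_k+\Delta\theta^*,\qquad \omega_{k+1}-\omega_k=P\sin\theta_k\left[\frac{1}{\omega_k}+\frac{1}{\omega_{k+1}}\right],$$ and the assumption $\omega_k^2>|P|$ for every $k\ge1$. If $\theta_1=0$, then the solution is periodic with period $N$: for every $k\ge 1$, $\theta_{k+N}=\theta_k+2\pi$ (so $\theta_{k+N}\equiv\theta_k \pmod{2\pi}$) and $\omega_{k+N}=\omega_k$; in particular $\omega_{N+1}=\omega_1$.
   Context: This is the "discrete zero dynamics" of a devil-stick with parameter $\phi=\pm\pi/2$; in the paper $P=\frac{g(\Delta\theta^* )^2}{2R\sin(\Delta\theta^* )}$ if $\phi=-\pi/2$ and $P=-\frac{g(\Delta\theta^* )^2}{2R\sin(\Delta\theta^* )}$ if $\phi=\pi/2$, where $g>0$ (gravity) and $R>0$ are constants. The hypothesis $\omega_k^2>|P|$ for all $k$ is the paper's Assumption 1. *)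

theory Defs
  imports Complex_Main
begin

end

theory Submission
  imports Defs
begin

text \<open>Each step of the recursion determines its endpoint uniquely under the bound
  \<open>\<bar>P\<bar> < \<omega>\<^sup>2\<close>, and it is reversible: swapping the two endpoints of a step flips the
  sign of its coefficient \<open>P sin \<theta>\<^sub>k\<close>. Since \<open>\<theta>\<^sub>k = 2\<pi>(k-1)/N\<close>, the coefficients are
  antisymmetric under \<open>k \<mapsto> N + 2 - k\<close>, so the solution is a palindrome on \<open>2..N+1\<close>; together
  with \<open>sin \<theta>\<^sub>1 = 0\<close>, i.e. \<open>\<omega>\<^sub>2 = \<omega>\<^sub>1\<close>, this gives \<open>\<omega>\<^sub>N\<^sub>+\<^sub>1 = \<omega>\<^sub>1\<close>. The shifted sequence
  \<open>\<omega>\<^sub>k\<^sub>+\<^sub>N\<close> solves the same recursion, so it coincides with \<open>\<omega>\<^sub>k\<close>.\<close>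

lemma abs_less_mult_of_abs_less_squares:
  fixes c y z :: real
  assumes "y > 0" "z > 0" "\<bar>c\<bar> < y\<^sup>2" "\<bar>c\<bar> < z\<^sup>2"
  shows "\<bar>c\<bar> < y * z"
proof (cases "y \<le> z")
  case True
  then have "y * y \<le> y * z" using assms(1) by (intro mult_left_mono) auto
  then show ?thesis using assms(3) by (simp add: power2_eq_square)
next
  case False
  then have "z * z \<le> y * z" using assms(2) by (intro mult_right_mono) auto
  then show ?thesis using assms(4) by (simp add: power2_eq_square)
qed

lemma implicit_step_unique:
  fixes c x y z :: real
  assumes "y > 0" "z > 0" "\<bar>c\<bar> < y\<^sup>2" "\<bar>c\<bar> < z\<^sup>2"
    and y: "y - x = c * (1 / x + 1 / y)" and z: "z - x = c * (1 / x + 1 / z)"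
  shows "y = z"
proof -
  have "y - z = c * (1 / y - 1 / z)" using y z by (simp add: algebra_simps)
  then have "(y - z) * (y * z + c) = 0" using assms(1,2) by (simp add: field_simps)
  moreover have "y * z + c > 0"
    using abs_less_mult_of_abs_less_squares[OF assms(1-4)] by linarith
  ultimately show ?thesis by simp
qed

lemma arith_progression_shift:
  fixes \<theta> :: "nat \<Rightarrow> real"
  assumes "\<And>k. k \<ge> 1 \<Longrightarrow> \<theta> (k + 1) = \<theta> k + d" and "k \<ge> 1"
  shows "\<theta> (k + n) = \<theta> k + real n * d"
  by (induction n) (use assms in \<open>auto simp: algebra_simps\<close>)

lemma equally_spaced_angles_period:
  fixes \<theta> :: "nat \<Rightarrow> real"
  assumes "\<And>k. k \<ge> 1 \<Longrightarrow> \<theta> (k + 1) = \<theta> k + 2 * pi / real N" and "N > 0" and "k \<ge> 1"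
  shows "\<theta> (k + N) = \<theta> k + 2 * pi"
  using arith_progression_shift[where \<theta> = \<theta>, OF assms(1,3), of N] \<open>N > 0\<close> by simp

lemma equally_spaced_angles_sin_reflect:
  fixes \<theta> :: "nat \<Rightarrow> real"
  assumes step: "\<And>k. k \<ge> 1 \<Longrightarrow> \<theta> (k + 1) = \<theta> k + 2 * pi / real N"
    and "N > 0" and "\<theta> 1 = 0" and "k \<ge> 1" and "k < N + 2"
  shows "sin (\<theta> (N + 2 - k)) = - sin (\<theta> k)"
proof -
  have indices: "1 + (N + 1 - k) = N + 2 - k" "1 + (k - 1) = k" using assms(4,5) by auto
  have "\<theta> (N + 2 - k) + \<theta> k = (real (N + 1 - k) + real (k - 1)) * (2 * pi / real N)"
    using arith_progression_shift[where \<theta> = \<theta>, OF step, of 1 "N + 1 - k", unfolded indices]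
      arith_progression_shift[where \<theta> = \<theta>, OF step, of 1 "k - 1", unfolded indices] \<open>\<theta> 1 = 0\<close>
    by (simp only: distrib_right)
  also have "real (N + 1 - k) + real (k - 1) = real N" using assms(4,5) by (simp add: of_nat_diff)
  also have "real N * (2 * pi / real N) = 2 * pi" using \<open>N > 0\<close> by simp
  finally have "\<theta> (N + 2 - k) = 2 * pi - \<theta> k" by linarith
  then show ?thesis by (simp add: sin_2pi_minus)
qed

lemma implicit_recursion_unique:
  fixes c w v :: "nat \<Rightarrow> real"
  assumes bound: "\<And>k. k \<ge> 1 \<Longrightarrow> \<bar>c k\<bar> \<le> B"
    and w_pos: "\<And>k. k \<ge> 1 \<Longrightarrow> w k > 0" and w_big: "\<And>k. k \<ge> 1 \<Longrightarrow> B < (w k)\<^sup>2"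
    and v_pos: "\<And>k. k \<ge> 1 \<Longrightarrow> v k > 0" and v_big: "\<And>k. k \<ge> 1 \<Longrightarrow> B < (v k)\<^sup>2"
    and w_step: "\<And>k. k \<ge> 1 \<Longrightarrow> w (k + 1) - w k = c k * (1 / w k + 1 / w (k + 1))"
    and v_step: "\<And>k. k \<ge> 1 \<Longrightarrow> v (k + 1) - v k = c k * (1 / v k + 1 / v (k + 1))"
    and "w 1 = v 1" and "k \<ge> 1"
  shows "w k = v k"
  using \<open>k \<ge> 1\<close>
proof (induction k rule: dec_induct)
  case base
  then show ?case using \<open>w 1 = v 1\<close> by simp
next
  case (step m)
  have "\<bar>c m\<bar> < (w (m + 1))\<^sup>2" "\<bar>c m\<bar> < (v (m + 1))\<^sup>2"
    using bound[of m] w_big[of "m + 1"] v_big[of "m + 1"] step(1) by auto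
  moreover have "v (m + 1) - w m = c m * (1 / w m + 1 / v (m + 1))"
    using v_step[of m] step by simp
  ultimately have "w (m + 1) = v (m + 1)"
    using implicit_step_unique[OF w_pos[of "m + 1"] v_pos[of "m + 1"] _ _ w_step[of m]] step(1)
    by simp
  then show ?case by simp
qed

lemma implicit_recursion_palindrome:
  fixes c w :: "nat \<Rightarrow> real"
  assumes bound: "\<And>k. k \<ge> 1 \<Longrightarrow> \<bar>c k\<bar> \<le> B"
    and pos: "\<And>k. k \<ge> 1 \<Longrightarrow> w k > 0" and big: "\<And>k. k \<ge> 1 \<Longrightarrow> B < (w k)\<^sup>2"
    and step: "\<And>k. k \<ge> 1 \<Longrightarrow> w (k + 1) - w k = c k * (1 / w k + 1 / w (k + 1))"
    and antisym: "\<And>k. k \<ge> 1 \<Longrightarrow> k < M \<Longrightarrow> c (M - k) = - c k"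
    and "k \<ge> 1" and "2 * k \<le> M + 1"
  shows "w k = w (M + 1 - k)"
  using assms(6,7)
proof (induction "M + 1 - 2 * k" arbitrary: k rule: less_induct)
  case less
  consider "2 * k = M + 1" | "2 * k = M" | "2 * k + 2 \<le> M + 1" using less.prems by linarith
  then show ?case
  proof cases
    case 1
    then have "M + 1 - k = k" by linarith
    then show ?thesis by simp
  next
    case 2
    then have "M - k = k" "k < M" and mirror: "M + 1 - k = k + 1" using less.prems by linarith+
    then have "c k = 0" using antisym[of k] less.prems by simp
    then show ?thesis using step[of k] less.prems unfolding mirror by simp
  next
    case 3
    define x where "x = w (k + 1)"
    define j where "j = M - k"
    have j: "j \<ge> 1" "M + 1 - k = j + 1" "c j = - c k"
      using 3 antisym[of k] less.prems by (auto simp: j_def)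
    have "x = w j"
      using less.hyps[of "k + 1"] 3 less.prems by (simp add: x_def j_def)
    then have backward: "w (j + 1) - x = - c k * (1 / x + 1 / w (j + 1))"
      using step[of j] j by simp
    have forward_reversed: "w k - x = - c k * (1 / x + 1 / w k)"
      using step[of k] less.prems by (simp add: x_def algebra_simps)
    have "\<bar>- c k\<bar> < (w k)\<^sup>2" "\<bar>- c k\<bar> < (w (j + 1))\<^sup>2"
      using bound[of k] big[of k] big[of "j + 1"] less.prems by auto
    then have "w k = w (j + 1)"
      using implicit_step_unique[OF pos[of k] pos[of "j + 1"] _ _ forward_reversed backward]
        less.prems by simp
    then show ?thesis using j(2) by simp
  qed
qed

theorem lemma1:
  fixes N :: nat and P :: real and \<theta> \<omega> :: "nat \<Rightarrow> real"
  assumes hN: "N \<ge> 3"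
    and hP: "P \<noteq> 0"
    and hpos: "\<And>k. k \<ge> 1 \<Longrightarrow> \<omega> k > 0"
    and htheta: "\<And>k. k \<ge> 1 \<Longrightarrow> \<theta> (k + 1) = \<theta> k + 2 * pi / real N"
    and homega: "\<And>k. k \<ge> 1 \<Longrightarrow>
        \<omega> (k + 1) - \<omega> k = P * sin (\<theta> k) * (1 / \<omega> k + 1 / \<omega> (k + 1))"
    and hA1: "\<And>k. k \<ge> 1 \<Longrightarrow> (\<omega> k)\<^sup>2 > \<bar>P\<bar>"
    and h0: "\<theta> 1 = 0"
  shows "\<forall>k\<ge>1. \<theta> (k + N) = \<theta> k + 2 * pi \<and> \<omega> (k + N) = \<omega> k"
proof -
  have bound: "\<bar>P * sin t\<bar> \<le> \<bar>P\<bar>" for t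
    by (simp add: abs_mult mult_left_le)
  have N_pos: "N > 0" using hN by simp
  have theta_period: "\<theta> (k + N) = \<theta> k + 2 * pi" if "k \<ge> 1" for k
    using equally_spaced_angles_period[where \<theta> = \<theta>, OF htheta N_pos that] .
  have sin_antisym: "P * sin (\<theta> (N + 2 - k)) = - (P * sin (\<theta> k))"
    if "k \<ge> 1" "k < N + 2" for k
    using equally_spaced_angles_sin_reflect[where \<theta> = \<theta>, OF htheta N_pos h0 that] by simp
  have "\<omega> 2 = \<omega> 1" using homega[of 1] h0 by (simp add: numeral_eq_Suc)
  moreover have "\<omega> 2 = \<omega> (N + 1)"
    using implicit_recursion_palindrome[where c = "\<lambda>k. P * sin (\<theta> k)",
        OF bound hpos hA1 homega sin_antisym, of 2] hN by simp
  ultimately have start: "\<omega> (1 + N) = \<omega> 1" by simp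
  have shifted: "\<omega> (k + 1 + N) - \<omega> (k + N) =
      P * sin (\<theta> k) * (1 / \<omega> (k + N) + 1 / \<omega> (k + 1 + N))" if "k \<ge> 1" for k
  proof -
    have "k + 1 + N = k + N + 1" by simp
    then show ?thesis using homega[of "k + N"] theta_period[OF that] that by simp
  qed
  have "\<omega> (k + N) = \<omega> k" if "k \<ge> 1" for k
    using implicit_recursion_unique[where c = "\<lambda>k. P * sin (\<theta> k)" and v = \<omega>,
        OF bound _ hA1 hpos hA1 shifted homega start that] hpos
    by simp
  then show ?thesis using theta_period by simp
qed

end
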